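(* Let $(\mathfrak g,[\cdot,\cdot],\alpha,\varepsilon,B)$ be a quadratic multiplicative color Hom-Lie algebra, $\rho$ a representation of $\mathfrak g$ on $(M,\beta)$ with $\alpha^2=\mathrm{id}$ and $\beta^2=\mathrm{id}$, and assume that $\tilde\rho$, $\tilde\rho(x)(f)=-\varepsilon(x,f)\,f\circ\rho(x)$, is a representation of $\mathfrak g$ on $(M^*,\tilde\beta)$, $\tilde\beta(f)=f\circ\beta$. Let $\mathscr D:M\otimes M^*\to\mathfrak g$ be the even linear map defined by $B(x,\mathscr D(m\otimes f))=\langle\rho(\alpha(x))(m),f\rangle$ for all $x\in\mathfrak g$, where $\langle n,f\rangle=\varepsilon(n,f)f(n)$ for homogeneous $n,f$. Then for all homogeneous $x\in\mathfrak g$, $m\in M$, $f\in M^*$: $[x,\mathscr D(m\otimes f)]=\mathscr D\big(\rho(x)(m)\otimes\tilde\beta(f)+\varepsilon(x,m)\,\beta(m)\otimes\tilde\rho(x)(f)\big)$.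
   Context: $\mathbb K$ is a field of characteristic zero and $\Gamma$ an abelian group. A bicharacter is a map $\varepsilon:\Gamma\times\Gamma\to\mathbb K\setminus\{0\}$ with $\varepsilon(a,b)\varepsilon(b,a)=1$, $\varepsilon(a,b+c)=\varepsilon(a,b)\varepsilon(a,c)$, $\varepsilon(a+b,c)=\varepsilon(a,c)\varepsilon(b,c)$; for homogeneous elements $\varepsilon(x,y)=\varepsilon(\deg x,\deg y)$. A color Hom-Lie algebra $(\mathfrak g,[\cdot,\cdot],\alpha,\varepsilon)$: $\Gamma$-graded space, even bilinear bracket, even linear $\alpha$, with $[x,y]=-\varepsilon(x,y)[y,x]$ and $\varepsilon(z,x)[\alpha(x),[y,z]]+\varepsilon(x,y)[\alpha(y),[z,x]]+\varepsilon(y,z)[\alpha(z),[x,y]]=0$; multiplicative means $\alpha([x,y])=[\alpha(x),\alpha(y)]$; quadratic means equipped with a nondegenerate bilinear form $B$ that is $\varepsilon$-symmetric ($B(x,y)=\varepsilon(x,y)B(y,x)$), invariant ($B([x,y],z)=B(x,[y,z])$), with $B(\alpha(x),y)=B(x,\alpha(y))$. A representation of a multiplicative $\mathfrak g$ on $(M,\beta)$ is an even linear $\rho:\mathfrak g\to\mathfrak{gl}(M)$ with $\rho([x,y])\circ\beta=\rho(\alpha(x))\circ\rho(y)-\varepsilon(x,y)\rho(\alpha(y))\circ\rho(x)$ and $\beta\circ\rho(x)=\rho(\alpha(x))\circ\beta$. $M^*$ is the graded dual (degree-$\gamma$ forms vanish on $M_\delta$ for $\delta\ne-\gamma$). *)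

theory Defs
  imports "HOL.Vector_Spaces"
begin

definition bichar :: "('g::ab_group_add \<Rightarrow> 'g \<Rightarrow> 'k::field) \<Rightarrow> bool" where
  "bichar \<epsilon> \<longleftrightarrow> (\<forall>a b. \<epsilon> a b \<noteq> 0) \<and> (\<forall>a b. \<epsilon> a b * \<epsilon> b a = 1)
     \<and> (\<forall>a b c. \<epsilon> a (b + c) = \<epsilon> a b * \<epsilon> a c)
     \<and> (\<forall>a b c. \<epsilon> (a + b) c = \<epsilon> a c * \<epsilon> b c)"

definition graded_space ::
  "('k::field \<Rightarrow> 'v::ab_group_add \<Rightarrow> 'v) \<Rightarrow> ('g \<Rightarrow> 'v set) \<Rightarrow> bool" where
  "graded_space s V \<longleftrightarrow> vector_space s \<and> (\<forall>a. Modules.module.subspace s (V a))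
     \<and> (\<forall>x. \<exists>!p. finite {a. p a \<noteq> 0} \<and> (\<forall>a. p a \<in> V a) \<and> x = sum p {a. p a \<noteq> 0})"

definition even_map :: "('g \<Rightarrow> 'v set) \<Rightarrow> ('g \<Rightarrow> 'w set) \<Rightarrow> ('v \<Rightarrow> 'w) \<Rightarrow> bool" where
  "even_map V W f \<longleftrightarrow> (\<forall>a x. x \<in> V a \<longrightarrow> f x \<in> W a)"

definition color_hom_lie ::
  "('k::field \<Rightarrow> 'L::ab_group_add \<Rightarrow> 'L) \<Rightarrow> ('g::ab_group_add \<Rightarrow> 'L set) \<Rightarrow>
   ('L \<Rightarrow> 'L \<Rightarrow> 'L) \<Rightarrow> ('L \<Rightarrow> 'L) \<Rightarrow> ('g \<Rightarrow> 'g \<Rightarrow> 'k) \<Rightarrow> bool" where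
  "color_hom_lie s G br \<alpha> \<epsilon> \<longleftrightarrow> graded_space s G \<and> bichar \<epsilon>
     \<and> (\<forall>y. Vector_Spaces.linear s s (\<lambda>x. br x y)) \<and> (\<forall>x. Vector_Spaces.linear s s (br x))
     \<and> (\<forall>a b x y. x \<in> G a \<longrightarrow> y \<in> G b \<longrightarrow> br x y \<in> G (a + b))
     \<and> Vector_Spaces.linear s s \<alpha> \<and> even_map G G \<alpha>
     \<and> (\<forall>a b x y. x \<in> G a \<longrightarrow> y \<in> G b \<longrightarrow> br x y = - s (\<epsilon> a b) (br y x))
     \<and> (\<forall>a b c x y z. x \<in> G a \<longrightarrow> y \<in> G b \<longrightarrow> z \<in> G c \<longrightarrow>
          s (\<epsilon> c a) (br (\<alpha> x) (br y z)) + s (\<epsilon> a b) (br (\<alpha> y) (br z x))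
          + s (\<epsilon> b c) (br (\<alpha> z) (br x y)) = 0)"

definition multiplicative :: "('L \<Rightarrow> 'L \<Rightarrow> 'L) \<Rightarrow> ('L \<Rightarrow> 'L) \<Rightarrow> bool" where
  "multiplicative br \<alpha> \<longleftrightarrow> (\<forall>x y. \<alpha> (br x y) = br (\<alpha> x) (\<alpha> y))"

definition quadratic_form ::
  "('k::field \<Rightarrow> 'L::ab_group_add \<Rightarrow> 'L) \<Rightarrow> ('g::ab_group_add \<Rightarrow> 'L set) \<Rightarrow>
   ('L \<Rightarrow> 'L \<Rightarrow> 'L) \<Rightarrow> ('L \<Rightarrow> 'L) \<Rightarrow> ('g \<Rightarrow> 'g \<Rightarrow> 'k) \<Rightarrow> ('L \<Rightarrow> 'L \<Rightarrow> 'k) \<Rightarrow> bool" where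
  "quadratic_form s G br \<alpha> \<epsilon> B \<longleftrightarrow>
     (\<forall>y. Vector_Spaces.linear s (*) (\<lambda>x. B x y)) \<and> (\<forall>x. Vector_Spaces.linear s (*) (B x))
     \<and> (\<forall>x. (\<forall>y. B x y = 0) \<longrightarrow> x = 0)
     \<and> (\<forall>a b x y. x \<in> G a \<longrightarrow> y \<in> G b \<longrightarrow> B x y = \<epsilon> a b * B y x)
     \<and> (\<forall>x y z. B (br x y) z = B x (br y z))
     \<and> (\<forall>x y. B (\<alpha> x) y = B x (\<alpha> y))"

definition representation ::
  "('k::field \<Rightarrow> 'L::ab_group_add \<Rightarrow> 'L) \<Rightarrow> ('g::ab_group_add \<Rightarrow> 'L set) \<Rightarrow>
   ('L \<Rightarrow> 'L \<Rightarrow> 'L) \<Rightarrow> ('L \<Rightarrow> 'L) \<Rightarrow> ('g \<Rightarrow> 'g \<Rightarrow> 'k) \<Rightarrow>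
   ('k \<Rightarrow> 'M::ab_group_add \<Rightarrow> 'M) \<Rightarrow> ('g \<Rightarrow> 'M set) \<Rightarrow> ('L \<Rightarrow> 'M \<Rightarrow> 'M) \<Rightarrow> ('M \<Rightarrow> 'M) \<Rightarrow> bool" where
  "representation s G br \<alpha> \<epsilon> sM GM \<rho> \<beta> \<longleftrightarrow> graded_space sM GM
     \<and> (\<forall>m. Vector_Spaces.linear s sM (\<lambda>x. \<rho> x m)) \<and> (\<forall>x. Vector_Spaces.linear sM sM (\<rho> x))
     \<and> (\<forall>a b x m. x \<in> G a \<longrightarrow> m \<in> GM b \<longrightarrow> \<rho> x m \<in> GM (a + b))
     \<and> Vector_Spaces.linear sM sM \<beta> \<and> even_map GM GM \<beta>
     \<and> (\<forall>a b x y m. x \<in> G a \<longrightarrow> y \<in> G b \<longrightarrow>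
          \<rho> (br x y) (\<beta> m) = \<rho> (\<alpha> x) (\<rho> y m) - sM (\<epsilon> a b) (\<rho> (\<alpha> y) (\<rho> x m)))
     \<and> (\<forall>x m. \<beta> (\<rho> x m) = \<rho> (\<alpha> x) (\<beta> m))"

text \<open>Homogeneous elements of degree c of the graded dual M*: linear forms vanishing on
  M_d for d \<noteq> -c.\<close>
definition dual_hom :: "('k::field \<Rightarrow> 'M::ab_group_add \<Rightarrow> 'M) \<Rightarrow> ('g::ab_group_add \<Rightarrow> 'M set) \<Rightarrow>
   'g \<Rightarrow> ('M \<Rightarrow> 'k) \<Rightarrow> bool" where
  "dual_hom sM GM c f \<longleftrightarrow> Vector_Spaces.linear sM (*) f \<and> (\<forall>d m. d \<noteq> - c \<longrightarrow> m \<in> GM d \<longrightarrow> f m = 0)"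

text \<open>rho_tilde(x)(f) = - eps(x,f) f o rho(x), for x of degree a and f of degree c.\<close>
definition rho_t :: "('g \<Rightarrow> 'g \<Rightarrow> 'k::field) \<Rightarrow> ('L \<Rightarrow> 'M \<Rightarrow> 'M) \<Rightarrow> 'g \<Rightarrow> 'g \<Rightarrow> 'L \<Rightarrow> ('M \<Rightarrow> 'k) \<Rightarrow> ('M \<Rightarrow> 'k)" where
  "rho_t \<epsilon> \<rho> a c x f = (\<lambda>n. - (\<epsilon> a c * f (\<rho> x n)))"

definition beta_t :: "('M \<Rightarrow> 'M) \<Rightarrow> ('M \<Rightarrow> 'k) \<Rightarrow> ('M \<Rightarrow> 'k)" where
  "beta_t \<beta> f = f \<circ> \<beta>"

text \<open>rho_tilde is a representation on (M*, beta_tilde), written out on homogeneous elements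
  (the identities are linear in f, so this is equivalent to the statement on all of M*).\<close>
definition dual_representation ::
  "('k::field \<Rightarrow> 'L::ab_group_add \<Rightarrow> 'L) \<Rightarrow> ('g::ab_group_add \<Rightarrow> 'L set) \<Rightarrow>
   ('L \<Rightarrow> 'L \<Rightarrow> 'L) \<Rightarrow> ('L \<Rightarrow> 'L) \<Rightarrow> ('g \<Rightarrow> 'g \<Rightarrow> 'k) \<Rightarrow>
   ('k \<Rightarrow> 'M::ab_group_add \<Rightarrow> 'M) \<Rightarrow> ('g \<Rightarrow> 'M set) \<Rightarrow> ('L \<Rightarrow> 'M \<Rightarrow> 'M) \<Rightarrow> ('M \<Rightarrow> 'M) \<Rightarrow> bool" where
  "dual_representation s G br \<alpha> \<epsilon> sM GM \<rho> \<beta> \<longleftrightarrow>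
     (\<forall>a b c x y f. x \<in> G a \<longrightarrow> y \<in> G b \<longrightarrow> dual_hom sM GM c f \<longrightarrow>
        rho_t \<epsilon> \<rho> (a + b) c (br x y) (beta_t \<beta> f)
        = (\<lambda>n. rho_t \<epsilon> \<rho> a (b + c) (\<alpha> x) (rho_t \<epsilon> \<rho> b c y f) n
               - \<epsilon> a b * rho_t \<epsilon> \<rho> b (a + c) (\<alpha> y) (rho_t \<epsilon> \<rho> a c x f) n))
     \<and> (\<forall>a c x f. x \<in> G a \<longrightarrow> dual_hom sM GM c f \<longrightarrow>
        beta_t \<beta> (rho_t \<epsilon> \<rho> a c x f) = rho_t \<epsilon> \<rho> a c (\<alpha> x) (beta_t \<beta> f))"

end

theory Submission
  imports Defs
begin

text \<open>Since \<open>B\<close> is nondegenerate and \<open>\<epsilon>\<close>-symmetric, it suffices to pair both sides with a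
  homogeneous \<open>y\<close>. By invariance \<open>B(y, [x, D(m \<otimes> f)]) = B([y, x], D(m \<otimes> f))\<close>, and by the
  defining property of \<open>D\<close> this is \<open>f\<close> evaluated at \<open>\<rho>(\<alpha>[y, x])(m) = \<rho>([\<alpha> y, \<alpha> x])(\<beta>(\<beta> m))\<close>.
  The representation identity splits this vector into two terms; using \<open>\<alpha>\<^sup>2 = id\<close> and
  \<open>\<beta> \<circ> \<rho>(x) = \<rho>(\<alpha> x) \<circ> \<beta>\<close>, these are the pairings of \<open>y\<close> with the two terms on the
  right-hand side, up to an identity between values of the bicharacter.\<close>

lemma color_hom_lie_bichar: "color_hom_lie s G br \<alpha> \<epsilon> \<Longrightarrow> bichar \<epsilon>"
  unfolding color_hom_lie_def by blast

lemma color_hom_lie_graded: "color_hom_lie s G br \<alpha> \<epsilon> \<Longrightarrow> graded_space s G"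
  unfolding color_hom_lie_def by blast

lemma color_hom_lie_bracket_homogeneous:
  "color_hom_lie s G br \<alpha> \<epsilon> \<Longrightarrow> x \<in> G a \<Longrightarrow> y \<in> G b \<Longrightarrow> br x y \<in> G (a + b)"
  unfolding color_hom_lie_def by blast

lemma color_hom_lie_twist_homogeneous:
  "color_hom_lie s G br \<alpha> \<epsilon> \<Longrightarrow> x \<in> G a \<Longrightarrow> \<alpha> x \<in> G a"
  unfolding color_hom_lie_def even_map_def by blast

lemma quadratic_form_linear_right:
  "quadratic_form s G br \<alpha> \<epsilon> B \<Longrightarrow> module_hom s (*) (B x)"
  unfolding quadratic_form_def module_hom_iff_linear by blast

lemma quadratic_form_nondegenerate:
  "quadratic_form s G br \<alpha> \<epsilon> B \<Longrightarrow> (\<And>y. B x y = 0) \<Longrightarrow> x = 0"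
  unfolding quadratic_form_def by blast

lemma quadratic_form_symmetric:
  "quadratic_form s G br \<alpha> \<epsilon> B \<Longrightarrow> x \<in> G a \<Longrightarrow> y \<in> G b \<Longrightarrow> B x y = \<epsilon> a b * B y x"
  unfolding quadratic_form_def by blast

lemma quadratic_form_invariant:
  "quadratic_form s G br \<alpha> \<epsilon> B \<Longrightarrow> B (br x y) z = B x (br y z)"
  unfolding quadratic_form_def by blast

lemma
  assumes "representation s G br \<alpha> \<epsilon> sM GM \<rho> \<beta>"
  shows representation_linear: "module_hom sM sM (\<rho> x)"
    and representation_homogeneous: "x \<in> G a \<Longrightarrow> m \<in> GM b \<Longrightarrow> \<rho> x m \<in> GM (a + b)"
    and representation_twist_linear: "Vector_Spaces.linear sM sM \<beta>"
    and representation_twist_homogeneous: "m \<in> GM a \<Longrightarrow> \<beta> m \<in> GM a"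
    and representation_bracket: "x \<in> G a \<Longrightarrow> y \<in> G b \<Longrightarrow>
          \<rho> (br x y) (\<beta> m) = \<rho> (\<alpha> x) (\<rho> y m) - sM (\<epsilon> a b) (\<rho> (\<alpha> y) (\<rho> x m))"
    and representation_twist_commute: "\<beta> (\<rho> x m) = \<rho> (\<alpha> x) (\<beta> m)"
  using assms unfolding representation_def even_map_def module_hom_iff_linear by simp_all

lemma bichar_exchange:
  fixes \<epsilon> :: "'g::ab_group_add \<Rightarrow> 'g \<Rightarrow> 'k::field"
  assumes "bichar \<epsilon>"
  shows "\<epsilon> (d + a + b) c * \<epsilon> d a = \<epsilon> a b * (\<epsilon> (d + b) (a + c) * \<epsilon> a c)"
proof -
  have l: "\<And>x y z. \<epsilon> (x + y) z = \<epsilon> x z * \<epsilon> y z" and r: "\<And>x y z. \<epsilon> x (y + z) = \<epsilon> x y * \<epsilon> x z"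
    and s: "\<epsilon> a b * \<epsilon> b a = 1"
    using assms unfolding bichar_def by auto
  have "\<epsilon> a b * (\<epsilon> (d + b) (a + c) * \<epsilon> a c)
      = (\<epsilon> a b * \<epsilon> b a) * (\<epsilon> d a * \<epsilon> d c * \<epsilon> b c * \<epsilon> a c)"
    by (simp add: l r ac_simps)
  also have "\<dots> = \<epsilon> (d + a + b) c * \<epsilon> d a"
    by (simp add: s l ac_simps)
  finally show ?thesis by simp
qed

lemma dual_hom_beta_t:
  assumes rep: "representation s G br \<alpha> \<epsilon> sM GM \<rho> \<beta>" and f: "dual_hom sM GM c f"
  shows "dual_hom sM GM c (beta_t \<beta> f)"
  using f Vector_Spaces.linear_compose[OF representation_twist_linear[OF rep], of "(*)" f]
    representation_twist_homogeneous[OF rep]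
  unfolding dual_hom_def beta_t_def by auto

lemma dual_hom_rho_t:
  assumes rep: "representation s G br \<alpha> \<epsilon> sM GM \<rho> \<beta>"
    and x: "x \<in> G a" and f: "dual_hom sM GM c f"
  shows "dual_hom sM GM (a + c) (rho_t \<epsilon> \<rho> a c x f)"
proof -
  have f_linear: "module_hom sM (*) f" and f_vanishes: "\<And>d n. d \<noteq> - c \<Longrightarrow> n \<in> GM d \<Longrightarrow> f n = 0"
    using f unfolding dual_hom_def module_hom_iff_linear by auto
  have "module_hom sM (*) (\<lambda>n. - (\<epsilon> a c * f (\<rho> x n)))"
    using module_hom_compose[OF representation_linear[OF rep] f_linear] unfolding module_hom_iff
    by (simp add: algebra_simps)
  moreover have "rho_t \<epsilon> \<rho> a c x f n = 0" if "d \<noteq> - (a + c)" and "n \<in> GM d" for d n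
  proof -
    have "a + d \<noteq> - c"
    proof
      assume "a + d = - c"
      then have "d = - (a + c)" by (simp add: eq_neg_iff_add_eq_0 add_eq_0_iff2 add_ac)
      with that(1) show False by contradiction
    qed
    then show ?thesis
      unfolding rho_t_def using f_vanishes representation_homogeneous[OF rep x that(2)] by auto
  qed
  ultimately show ?thesis unfolding dual_hom_def rho_t_def module_hom_iff_linear by auto
qed

lemma quadratic_form_homogeneous_eq_0:
  assumes G: "graded_space s G" and B: "quadratic_form s G br \<alpha> \<epsilon> B"
    and z: "z \<in> G e" and orth: "\<And>d y. y \<in> G d \<Longrightarrow> B y z = 0"
  shows "z = 0"
proof (rule quadratic_form_nondegenerate[OF B])
  fix y
  obtain p where p: "finite {d. p d \<noteq> 0}" "\<And>d. p d \<in> G d" "y = sum p {d. p d \<noteq> 0}"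
    using G unfolding graded_space_def by metis
  have "B z y = (\<Sum>d\<in>{d. p d \<noteq> 0}. B z (p d))"
    unfolding p(3) by (rule module_hom.sum[OF quadratic_form_linear_right[OF B]])
  also have "\<dots> = 0"
    by (intro sum.neutral ballI) (simp add: quadratic_form_symmetric[OF B z p(2)] orth[OF p(2)])
  finally show "B z y = 0" .
qed

lemma graded_space_homogeneous_diff_scale:
  assumes "graded_space s G" and "x \<in> G a" and "y \<in> G a" and "z \<in> G a"
  shows "x - y - s k z \<in> G a"
proof -
  interpret vector_space s using assms(1) unfolding graded_space_def by blast
  have "subspace (G a)" using assms(1) unfolding graded_space_def by blast
  then show ?thesis using assms(2-4) by (intro subspace_diff subspace_scale)
qed

lemma pairing_bracket_D:
  assumes lie: "color_hom_lie sL G br \<alpha> \<epsilon>"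
    and mult: "multiplicative br \<alpha>"
    and quad: "quadratic_form sL G br \<alpha> \<epsilon> B"
    and rep: "representation sL G br \<alpha> \<epsilon> sM GM \<rho> \<beta>"
    and \<alpha>_inv: "\<And>x. \<alpha> (\<alpha> x) = x" and \<beta>_inv: "\<And>m. \<beta> (\<beta> m) = m"
    and D_pairing: "\<And>a b c x m f. x \<in> G a \<Longrightarrow> m \<in> GM b \<Longrightarrow> dual_hom sM GM c f \<Longrightarrow>
                  B x (D m f) = \<epsilon> (a + b) c * f (\<rho> (\<alpha> x) m)"
    and x: "x \<in> G a" and m: "m \<in> GM b" and f: "dual_hom sM GM c f" and y: "y \<in> G d"
  shows "B y (br x (D m f))
       = B y (D (\<rho> x m) (beta_t \<beta> f)) + \<epsilon> a b * B y (D (\<beta> m) (rho_t \<epsilon> \<rho> a c x f))"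
proof -
  have f_linear: "module_hom sM (*) f"
    using f unfolding dual_hom_def module_hom_iff_linear by blast
  have f\<beta>: "dual_hom sM GM c (beta_t \<beta> f)" and f\<rho>: "dual_hom sM GM (a + c) (rho_t \<epsilon> \<rho> a c x f)"
    using dual_hom_beta_t[OF rep f] dual_hom_rho_t[OF rep x f] by blast+
  define u where "u = f (\<rho> y (\<rho> (\<alpha> x) (\<beta> m)))"
  define v where "v = f (\<rho> x (\<rho> (\<alpha> y) (\<beta> m)))"
  have "\<rho> (\<alpha> (br y x)) m = \<rho> (br (\<alpha> y) (\<alpha> x)) (\<beta> (\<beta> m))"
    using mult \<beta>_inv unfolding multiplicative_def by simp
  also have "\<dots> = \<rho> y (\<rho> (\<alpha> x) (\<beta> m)) - sM (\<epsilon> d a) (\<rho> x (\<rho> (\<alpha> y) (\<beta> m)))"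
    using representation_bracket[OF rep color_hom_lie_twist_homogeneous[OF lie y]
        color_hom_lie_twist_homogeneous[OF lie x]] \<alpha>_inv by simp
  finally have "f (\<rho> (\<alpha> (br y x)) m) = u - \<epsilon> d a * v"
    unfolding u_def v_def using module_hom.diff[OF f_linear] module_hom.scale[OF f_linear] by simp
  then have lhs: "B y (br x (D m f)) = \<epsilon> (d + a + b) c * (u - \<epsilon> d a * v)"
    using quadratic_form_invariant[OF quad] D_pairing[OF color_hom_lie_bracket_homogeneous[OF lie y x] m f]
    by simp
  have "B y (D (\<rho> x m) (beta_t \<beta> f)) = \<epsilon> (d + (a + b)) c * beta_t \<beta> f (\<rho> (\<alpha> y) (\<rho> x m))"
    using D_pairing[OF y representation_homogeneous[OF rep x m] f\<beta>] .
  also have "beta_t \<beta> f (\<rho> (\<alpha> y) (\<rho> x m)) = u"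
    unfolding beta_t_def u_def using representation_twist_commute[OF rep] \<alpha>_inv by simp
  finally have D\<^sub>1: "B y (D (\<rho> x m) (beta_t \<beta> f)) = \<epsilon> (d + a + b) c * u"
    by (simp add: add.assoc)
  have D\<^sub>2: "B y (D (\<beta> m) (rho_t \<epsilon> \<rho> a c x f)) = \<epsilon> (d + b) (a + c) * - (\<epsilon> a c * v)"
    using D_pairing[OF y representation_twist_homogeneous[OF rep m] f\<rho>] unfolding rho_t_def v_def by simp
  show ?thesis
    unfolding lhs D\<^sub>1 D\<^sub>2 using bichar_exchange[OF color_hom_lie_bichar[OF lie], of d a b c]
    by (simp add: algebra_simps)
qed

theorem mainTheorem13:
  fixes sL :: "'k::field_char_0 \<Rightarrow> 'L::ab_group_add \<Rightarrow> 'L"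
    and G :: "'g::ab_group_add \<Rightarrow> 'L set"
    and br :: "'L \<Rightarrow> 'L \<Rightarrow> 'L" and \<alpha> :: "'L \<Rightarrow> 'L"
    and \<epsilon> :: "'g \<Rightarrow> 'g \<Rightarrow> 'k" and B :: "'L \<Rightarrow> 'L \<Rightarrow> 'k"
    and sM :: "'k \<Rightarrow> 'M::ab_group_add \<Rightarrow> 'M" and GM :: "'g \<Rightarrow> 'M set"
    and \<rho> :: "'L \<Rightarrow> 'M \<Rightarrow> 'M" and \<beta> :: "'M \<Rightarrow> 'M"
    and D :: "'M \<Rightarrow> ('M \<Rightarrow> 'k) \<Rightarrow> 'L"
  assumes lie: "color_hom_lie sL G br \<alpha> \<epsilon>"
    and mult: "multiplicative br \<alpha>"
    and quad: "quadratic_form sL G br \<alpha> \<epsilon> B"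
    and rep: "representation sL G br \<alpha> \<epsilon> sM GM \<rho> \<beta>"
    and alpha_inv: "\<forall>x. \<alpha> (\<alpha> x) = x"
    and beta_inv: "\<forall>m. \<beta> (\<beta> m) = m"
    and dual_rep: "dual_representation sL G br \<alpha> \<epsilon> sM GM \<rho> \<beta>"
    and D_def: "\<forall>a b c x m f. x \<in> G a \<longrightarrow> m \<in> GM b \<longrightarrow> dual_hom sM GM c f \<longrightarrow>
                  B x (D m f) = \<epsilon> (a + b) c * f (\<rho> (\<alpha> x) m)"
    and D_even: "\<forall>b c m f. m \<in> GM b \<longrightarrow> dual_hom sM GM c f \<longrightarrow> D m f \<in> G (b + c)"
    and D_lin_m: "\<forall>c f. dual_hom sM GM c f \<longrightarrow> Vector_Spaces.linear sM sL (\<lambda>m. D m f)"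
    and D_add_f: "\<forall>m c c' f g. dual_hom sM GM c f \<longrightarrow> dual_hom sM GM c' g \<longrightarrow>
                    D m (\<lambda>n. f n + g n) = D m f + D m g"
    and D_scale_f: "\<forall>m c f k. dual_hom sM GM c f \<longrightarrow> D m (\<lambda>n. k * f n) = sL k (D m f)"
    and x_hom: "x \<in> G a" and m_hom: "m \<in> GM b" and f_hom: "dual_hom sM GM c f"
  shows "br x (D m f) = D (\<rho> x m) (beta_t \<beta> f) + sL (\<epsilon> a b) (D (\<beta> m) (rho_t \<epsilon> \<rho> a c x f))"
proof -
  define \<Delta> where
    "\<Delta> = br x (D m f) - D (\<rho> x m) (beta_t \<beta> f) - sL (\<epsilon> a b) (D (\<beta> m) (rho_t \<epsilon> \<rho> a c x f))"
  have "\<Delta> \<in> G (a + b + c)"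
    unfolding \<Delta>_def
  proof (rule graded_space_homogeneous_diff_scale[OF color_hom_lie_graded[OF lie]])
    show "br x (D m f) \<in> G (a + b + c)"
      using color_hom_lie_bracket_homogeneous[OF lie x_hom] D_even m_hom f_hom by (simp add: add.assoc)
    show "D (\<rho> x m) (beta_t \<beta> f) \<in> G (a + b + c)"
      using D_even representation_homogeneous[OF rep x_hom m_hom] dual_hom_beta_t[OF rep f_hom] by blast
    show "D (\<beta> m) (rho_t \<epsilon> \<rho> a c x f) \<in> G (a + b + c)"
      using D_even representation_twist_homogeneous[OF rep m_hom] dual_hom_rho_t[OF rep x_hom f_hom]
      by (metis add.commute add.left_commute)
  qed
  moreover have "B y \<Delta> = 0" if "y \<in> G d" for y d
    using pairing_bracket_D[OF lie mult quad rep alpha_inv[rule_format] beta_inv[rule_format]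
        D_def[rule_format] x_hom m_hom f_hom that]
      module_hom.diff[OF quadratic_form_linear_right[OF quad]]
      module_hom.scale[OF quadratic_form_linear_right[OF quad]]
    unfolding \<Delta>_def by simp
  ultimately have "\<Delta> = 0"
    by (rule quadratic_form_homogeneous_eq_0[OF color_hom_lie_graded[OF lie] quad])
  then show ?thesis unfolding \<Delta>_def by (simp add: algebra_simps)
qed

end
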